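(* For every history formula $\varphi$ of CTL*KΔ$_m$ of knowledge depth $k$, every multiagent model $M$, every history $h$ of $M$ and every record tuple $\vec r$ that stops at $h$: $$h,\vec r\models\varphi\quad\text{iff}\quad \mathit{KT}^k(h,\vec r),\ \vec o(h,\vec r)\models_I\varphi.$$
   Context: Fix a countably infinite set $\mathit{AP}$ of atomic propositions, a finite nonempty set $\mathit{Obs}$ of observations, and a finite set of agents $\mathit{Ag}=\{a_1,\dots,a_m\}$. For a word $w$ we write $w_i$ for its letter at position $i$ (positions start at $0$), $w_{\le i}$ for its prefix ending at position $i$, $w_{\ge i}$ for its suffix starting at position $i$, $|w|$ for its length (finite words) and $\mathit{last}(w)$ for its last letter; $w\preceq w'$ means $w$ is a prefix of $w'$. Syntax of CTL*KΔ$_m$: history formulas $\varphi::=p\mid\neg\varphi\mid\varphi\wedge\varphi\mid\mathbf A\psi\mid\mathbf K_a\varphi\mid\Delta^{o}_a\varphi$ and path formulas $\psi::=\varphi\mid\neg\psi\mid\psi\wedge\psi\mid\mathbf X\psi\mid\psi\,\mathbf U\,\psi$, with $p\in\mathit{AP}$, $a\in\mathit{Ag}$, $o\in\mathit{Obs}$; formulas are history formulas. The knowledge depth of a formula is the maximal nesting depth of operators $\mathbf K_a$ (over all agents). A multiagent model is $M=(\mathit{AP}_f,S,T,V,\{\sim_o\}_{o\in\mathit{Obs}},s_\iota,\vec o_\iota)$ where $\mathit{AP}_f\subseteq\mathit{AP}$ is finite, $S$ is a finite set of states, $T\subseteq S\times S$ is left-total, $V:S\to2^{\mathit{AP}_f}$,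 each $\sim_o$ is an equivalence relation on $S$, $s_\iota\in S$, and $\vec o_\iota\in\mathit{Obs}^{\mathit{Ag}}$ gives each agent an initial observation. Paths are infinite sequences of states $s_0s_1\dots$ with $s_iTs_{i+1}$ (starting anywhere); histories are finite nonempty prefixes of paths. For a tuple $\vec o\in\mathit{Obs}^{\mathit{Ag}}$, $\vec o_a$ is its $a$-component, $\vec o_i=\vec o_{a_i}$, and $\vec o[a\leftarrow o']$ is $\vec o$ with $\vec o_a$ replaced by $o'$. An observation record is a finite word over $\mathit{Obs}\times\mathbb N$; $r_{=n}$ is the subword of $r$ consisting of the pairs with second component $n$; $r$ stops at $n$ if $r_{=m}$ is empty for all $m>n$. A record tuple is $\vec r=(\vec r_a)_{a\in\mathit{Ag}}$; $\vec r\cdot(o,n)_a$ is $\vec r$ with $\vec r_a$ replaced by $\vec r_a\cdot(o,n)$; $\vec r$ stops at a history $h$ if each $\vec r_a$ stops at $|h|-1$. For agent $a$: $\mathit{ol}_a(\vec r,0)=\vec o_{\iota,a}\cdot o_1\cdots o_k$ if $(\vec r_a)_{=0}=(o_1,0)\cdots(o_k,0)$, and $\mathit{ol}_a(\vec r,n+1)=\mathit{last}(\mathit{ol}_a(\vec r,n))\cdot o_1\cdots o_k$ if $(\vec r_a)_{=n+1}=(o_1,n+1)\cdots(o_k,n+1)$. $h\approx^{\vec r}_a h'$ iff $|h|=|h'|$ and for all $i<|h|$ and all $o$ in $\mathit{ol}_a(\vec r,i)$, $h_i\sim_o h'_i$. $\vec o(h,\vec r)$ is the tuple whose $a$-component is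 the last element of $\mathit{ol}_a(\vec r,|h|-1)$. Natural semantics: $h,\vec r\models p$ iff $p\in V(\mathit{last}(h))$; negation and conjunction as usual; $h,\vec r\models\mathbf A\psi$ iff for all paths $\pi$ with $h\preceq\pi$, $\pi,|h|-1,\vec r\models\psi$; $h,\vec r\models\mathbf K_a\varphi$ iff $h',\vec r\models\varphi$ for all histories $h'\approx^{\vec r}_a h$; $h,\vec r\models\Delta^o_a\varphi$ iff $h,\vec r\cdot(o,|h|-1)_a\models\varphi$; $\pi,n,\vec r\models\varphi$ iff $\pi_{\le n},\vec r\models\varphi$; negation and conjunction as usual; $\pi,n,\vec r\models\mathbf X\psi$ iff $\pi,n+1,\vec r\models\psi$; $\pi,n,\vec r\models\psi_1\mathbf U\psi_2$ iff there is $m\ge n$ with $\pi,m,\vec r\models\psi_2$ and $\pi,j,\vec r\models\psi_1$ for all $n\le j<m$. $k$-trees: a $0$-tree is $\langle s,\emptyset,\dots,\emptyset\rangle$ with $s\in S$; a $(k+1)$-tree is $\langle s,F_1,\dots,F_m\rangle$ with $s\in S$ and each $F_i$ a set of $k$-trees; $\mathit{root}(\langle s,F_1,\dots,F_m\rangle)=s$ and $\tau(a_i)=F_i$. $\mathit{KT}^0(h,\vec r)=\langle\mathit{last}(h),\emptyset,\dots,\emptyset\rangle$ and $\mathit{KT}^{k+1}(h,\vec r)=\langle\mathit{last}(h),F_1,\dots,F_m\rangle$ with $F_i=\{\mathit{KT}^k(h',\vec r)\mid h'\approx^{\vec r}_{a_i}h\}$. Updates: $U_T^0(\langle s,\emptyset,\dots\rangle,s',\vec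 o)=\langle s',\emptyset,\dots,\emptyset\rangle$; $U_T^{k+1}(\langle s,F_1,\dots,F_m\rangle,s',\vec o)=\langle s',F'_1,\dots,F'_m\rangle$ with $F'_i=\{U_T^k(\tau,s'',\vec o)\mid\tau\in F_i,\ s''\sim_{\vec o_i}s',\ \mathit{root}(\tau)Ts''\}$. $U_\Delta^0(\langle s,\emptyset,\dots\rangle,o,a_i)=\langle s,\emptyset,\dots,\emptyset\rangle$; $U_\Delta^{k+1}(\langle s,F_1,\dots,F_m\rangle,o,a_i)=\langle s,F'_1,\dots,F'_m\rangle$ with $F'_j=\{U_\Delta^k(\tau,o,a_i)\mid\tau\in F_j\}$ for $j\ne i$ and $F'_i=\{U_\Delta^k(\tau,o,a_i)\mid\tau\in F_i,\ \mathit{root}(\tau)\sim_o s\}$. (Below, $U_T^k,U_\Delta^k$ are applied to trees of the matching depth $k$.) Alternative semantics, for a $k$-tree $\tau$ and $\vec o\in\mathit{Obs}^{\mathit{Ag}}$: $\tau,\vec o\models_I p$ iff $p\in V(\mathit{root}(\tau))$; negation and conjunction as usual; $\tau,\vec o\models_I\mathbf A\psi$ iff for all paths $\pi$ with $\pi_0=\mathit{root}(\tau)$, $\pi,\tau,\vec o\models_I\psi$; $\tau,\vec o\models_I\mathbf K_a\varphi$ iff $\tau',\vec o\models_I\varphi$ for all $\tau'\in\tau(a)$; $\tau,\vec o\models_I\Delta^{o'}_a\varphi$ iff $U_\Delta^k(\tau,o',a),\vec o[a\leftarrow o']\models_I\varphi$; $\pi,\tau,\vec o\models_I\varphi$ iff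 $\tau,\vec o\models_I\varphi$; negation and conjunction as usual; $\pi,\tau,\vec o\models_I\mathbf X\psi$ iff $\pi_{\ge1},U_T^k(\tau,\pi_1,\vec o),\vec o\models_I\psi$; $\pi,\tau,\vec o\models_I\psi_1\mathbf U\psi_2$ iff there is $n\ge0$ with $\pi_{\ge n},(U_T^k)^n(\tau,\pi,\vec o),\vec o\models_I\psi_2$ and $\pi_{\ge j},(U_T^k)^j(\tau,\pi,\vec o),\vec o\models_I\psi_1$ for all $0\le j<n$, where $(U_T^k)^0(\tau,\pi,\vec o)=\tau$ and $(U_T^k)^{n+1}(\tau,\pi,\vec o)=U_T^k((U_T^k)^n(\tau,\pi,\vec o),\pi_{n+1},\vec o)$. *)

theory Defs
  imports Main "HOL-Library.FSet"
begin

datatype ('a, 'ob) hform =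
    Prop nat
  | HNot "('a, 'ob) hform"
  | HAnd "('a, 'ob) hform" "('a, 'ob) hform"
  | All "('a, 'ob) pform"
  | Know 'a "('a, 'ob) hform"
  | Delta 'a 'ob "('a, 'ob) hform"
and ('a, 'ob) pform =
    PH "('a, 'ob) hform"
  | PNot "('a, 'ob) pform"
  | PAnd "('a, 'ob) pform" "('a, 'ob) pform"
  | Next "('a, 'ob) pform"
  | Until "('a, 'ob) pform" "('a, 'ob) pform"

primrec kdepth :: "('a, 'ob) hform \<Rightarrow> nat"
  and kdepth_p :: "('a, 'ob) pform \<Rightarrow> nat" where
  "kdepth (Prop p) = 0"
| "kdepth (HNot f) = kdepth f"
| "kdepth (HAnd f g) = max (kdepth f) (kdepth g)"
| "kdepth (All p) = kdepth_p p"
| "kdepth (Know a f) = Suc (kdepth f)"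
| "kdepth (Delta a ob f) = kdepth f"
| "kdepth_p (PH f) = kdepth f"
| "kdepth_p (PNot p) = kdepth_p p"
| "kdepth_p (PAnd p q) = max (kdepth_p p) (kdepth_p q)"
| "kdepth_p (Next p) = kdepth_p p"
| "kdepth_p (Until p q) = max (kdepth_p p) (kdepth_p q)"

text \<open>The finite set of states S is the universe of a finite type 's.\<close>

record ('s, 'ob, 'a) model =
  APf :: "nat set"
  Trans :: "'s \<Rightarrow> 's \<Rightarrow> bool"
  Val :: "'s \<Rightarrow> nat set"
  Sim :: "'ob \<Rightarrow> 's \<Rightarrow> 's \<Rightarrow> bool"
  sinit :: 's
  oinit :: "'a \<Rightarrow> 'ob"

definition wf_model :: "('s::finite, 'ob::finite, 'a::finite) model \<Rightarrow> bool" where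
  "wf_model M \<longleftrightarrow> finite (APf M) \<and> (\<forall>s. \<exists>s'. Trans M s s')
     \<and> (\<forall>s. Val M s \<subseteq> APf M) \<and> (\<forall>ob. equivp (Sim M ob))"

definition is_path :: "('s, 'ob, 'a) model \<Rightarrow> (nat \<Rightarrow> 's) \<Rightarrow> bool" where
  "is_path M \<pi> \<longleftrightarrow> (\<forall>i. Trans M (\<pi> i) (\<pi> (Suc i)))"

definition is_hist :: "('s, 'ob, 'a) model \<Rightarrow> 's list \<Rightarrow> bool" where
  "is_hist M h \<longleftrightarrow> (\<exists>\<pi>. is_path M \<pi> \<and> h = map \<pi> [0..<length h]) \<and> h \<noteq> []"

definition hprefix :: "'s list \<Rightarrow> (nat \<Rightarrow> 's) \<Rightarrow> bool" where
  "hprefix h \<pi> \<longleftrightarrow> (\<forall>i<length h. \<pi> i = h ! i)"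

definition pprefix :: "(nat \<Rightarrow> 's) \<Rightarrow> nat \<Rightarrow> 's list" where
  "pprefix \<pi> n = map \<pi> [0..<Suc n]"

type_synonym 'ob obsrec = "('ob \<times> nat) list"
type_synonym ('a, 'ob) rtuple = "'a \<Rightarrow> 'ob obsrec"

definition rec_at :: "'ob obsrec \<Rightarrow> nat \<Rightarrow> 'ob obsrec" where
  "rec_at r n = filter (\<lambda>p. snd p = n) r"

definition rec_stops :: "'ob obsrec \<Rightarrow> nat \<Rightarrow> bool" where
  "rec_stops r n \<longleftrightarrow> (\<forall>m>n. rec_at r m = [])"

definition rt_stops :: "('a, 'ob) rtuple \<Rightarrow> 's list \<Rightarrow> bool" where
  "rt_stops r h \<longleftrightarrow> (\<forall>a. rec_stops (r a) (length h - 1))"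

definition rt_add :: "('a, 'ob) rtuple \<Rightarrow> 'a \<Rightarrow> 'ob \<Rightarrow> nat \<Rightarrow> ('a, 'ob) rtuple" where
  "rt_add r a ob n = r(a := r a @ [(ob, n)])"

primrec ol :: "('s, 'ob, 'a) model \<Rightarrow> ('a, 'ob) rtuple \<Rightarrow> 'a \<Rightarrow> nat \<Rightarrow> 'ob list" where
  "ol M r a 0 = oinit M a # map fst (rec_at (r a) 0)"
| "ol M r a (Suc n) = last (ol M r a n) # map fst (rec_at (r a) (Suc n))"

definition hist_eq :: "('s, 'ob, 'a) model \<Rightarrow> ('a, 'ob) rtuple \<Rightarrow> 'a \<Rightarrow> 's list \<Rightarrow> 's list \<Rightarrow> bool" where
  "hist_eq M r a h h' \<longleftrightarrow> length h = length h'
     \<and> (\<forall>i<length h. \<forall>ob\<in>set (ol M r a i). Sim M ob (h ! i) (h' ! i))"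

definition obs_of :: "('s, 'ob, 'a) model \<Rightarrow> 's list \<Rightarrow> ('a, 'ob) rtuple \<Rightarrow> 'a \<Rightarrow> 'ob" where
  "obs_of M h r = (\<lambda>a. last (ol M r a (length h - 1)))"

primrec hsat :: "('s, 'ob, 'a) model \<Rightarrow> ('a, 'ob) hform \<Rightarrow> 's list \<Rightarrow> ('a, 'ob) rtuple \<Rightarrow> bool"
  and psat :: "('s, 'ob, 'a) model \<Rightarrow> ('a, 'ob) pform \<Rightarrow> (nat \<Rightarrow> 's) \<Rightarrow> nat \<Rightarrow> ('a, 'ob) rtuple \<Rightarrow> bool"
where
  "hsat M (Prop p) h r = (p \<in> Val M (last h))"
| "hsat M (HNot f) h r = (\<not> hsat M f h r)"
| "hsat M (HAnd f g) h r = (hsat M f h r \<and> hsat M g h r)"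
| "hsat M (All p) h r = (\<forall>\<pi>. is_path M \<pi> \<and> hprefix h \<pi> \<longrightarrow> psat M p \<pi> (length h - 1) r)"
| "hsat M (Know a f) h r = (\<forall>h'. is_hist M h' \<and> hist_eq M r a h h' \<longrightarrow> hsat M f h' r)"
| "hsat M (Delta a ob f) h r = hsat M f h (rt_add r a ob (length h - 1))"
| "psat M (PH f) \<pi> n r = hsat M f (pprefix \<pi> n) r"
| "psat M (PNot p) \<pi> n r = (\<not> psat M p \<pi> n r)"
| "psat M (PAnd p q) \<pi> n r = (psat M p \<pi> n r \<and> psat M q \<pi> n r)"
| "psat M (Next p) \<pi> n r = psat M p \<pi> (Suc n) r"
| "psat M (Until p q) \<pi> n r =
     (\<exists>m\<ge>n. psat M q \<pi> m r \<and> (\<forall>j. n \<le> j \<and> j < m \<longrightarrow> psat M p \<pi> j r))"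

text \<open>The depth k is not part of the type; it is carried explicitly by the functions below,
  which are only applied to trees of matching depth.\<close>

datatype ('s, 'a) ktree = KT (root: 's) (children: "'a \<Rightarrow> ('s, 'a) ktree fset")

primrec KTof :: "('s, 'ob, 'a) model \<Rightarrow> nat \<Rightarrow> 's list \<Rightarrow> ('a, 'ob) rtuple \<Rightarrow> ('s, 'a) ktree" where
  "KTof M 0 h r = KT (last h) (\<lambda>_. {||})"
| "KTof M (Suc k) h r = KT (last h)
     (\<lambda>a. Abs_fset {KTof M k h' r | h'. is_hist M h' \<and> hist_eq M r a h h'})"

primrec updT :: "('s, 'ob, 'a) model \<Rightarrow> nat \<Rightarrow> ('s, 'a) ktree \<Rightarrow> 's \<Rightarrow> ('a \<Rightarrow> 'ob) \<Rightarrow> ('s, 'a) ktree" where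
  "updT M 0 t s' ov = KT s' (\<lambda>_. {||})"
| "updT M (Suc k) t s' ov = KT s'
     (\<lambda>i. Abs_fset {updT M k t' s'' ov | t' s''. t' |\<in>| children t i
                      \<and> Sim M (ov i) s'' s' \<and> Trans M (root t') s''})"

primrec updD :: "('s, 'ob, 'a) model \<Rightarrow> nat \<Rightarrow> ('s, 'a) ktree \<Rightarrow> 'ob \<Rightarrow> 'a \<Rightarrow> ('s, 'a) ktree" where
  "updD M 0 t ob a = KT (root t) (\<lambda>_. {||})"
| "updD M (Suc k) t ob a = KT (root t)
     (\<lambda>j. if j = a
          then (\<lambda>t'. updD M k t' ob a) |`| ffilter (\<lambda>t'. Sim M ob (root t') (root t)) (children t j)
          else (\<lambda>t'. updD M k t' ob a) |`| children t j)"

primrec updT_iter :: "('s, 'ob, 'a) model \<Rightarrow> nat \<Rightarrow> ('s, 'a) ktree \<Rightarrow> (nat \<Rightarrow> 's) \<Rightarrow> ('a \<Rightarrow> 'ob) \<Rightarrow> nat \<Rightarrow> ('s, 'a) ktree" where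
  "updT_iter M k t \<pi> ov 0 = t"
| "updT_iter M k t \<pi> ov (Suc n) = updT M k (updT_iter M k t \<pi> ov n) (\<pi> (Suc n)) ov"

definition suffix_path :: "(nat \<Rightarrow> 's) \<Rightarrow> nat \<Rightarrow> nat \<Rightarrow> 's" where
  "suffix_path \<pi> n = (\<lambda>i. \<pi> (n + i))"

primrec isat :: "('s, 'ob, 'a) model \<Rightarrow> ('a, 'ob) hform \<Rightarrow> nat \<Rightarrow> ('s, 'a) ktree \<Rightarrow> ('a \<Rightarrow> 'ob) \<Rightarrow> bool"
  and ipsat :: "('s, 'ob, 'a) model \<Rightarrow> ('a, 'ob) pform \<Rightarrow> nat \<Rightarrow> (nat \<Rightarrow> 's) \<Rightarrow> ('s, 'a) ktree \<Rightarrow> ('a \<Rightarrow> 'ob) \<Rightarrow> bool"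
where
  "isat M (Prop p) k t ov = (p \<in> Val M (root t))"
| "isat M (HNot f) k t ov = (\<not> isat M f k t ov)"
| "isat M (HAnd f g) k t ov = (isat M f k t ov \<and> isat M g k t ov)"
| "isat M (All p) k t ov = (\<forall>\<pi>. is_path M \<pi> \<and> \<pi> 0 = root t \<longrightarrow> ipsat M p k \<pi> t ov)"
| "isat M (Know a f) k t ov = (\<forall>t'. t' |\<in>| children t a \<longrightarrow> isat M f (k - 1) t' ov)"
| "isat M (Delta a ob f) k t ov = isat M f k (updD M k t ob a) (ov(a := ob))"
| "ipsat M (PH f) k \<pi> t ov = isat M f k t ov"
| "ipsat M (PNot p) k \<pi> t ov = (\<not> ipsat M p k \<pi> t ov)"
| "ipsat M (PAnd p q) k \<pi> t ov = (ipsat M p k \<pi> t ov \<and> ipsat M q k \<pi> t ov)"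
| "ipsat M (Next p) k \<pi> t ov = ipsat M p k (suffix_path \<pi> 1) (updT M k t (\<pi> 1) ov) ov"
| "ipsat M (Until p q) k \<pi> t ov =
     (\<exists>n. ipsat M q k (suffix_path \<pi> n) (updT_iter M k t \<pi> ov n) ov
        \<and> (\<forall>j<n. ipsat M p k (suffix_path \<pi> j) (updT_iter M k t \<pi> ov j) ov))"

end

theory Submission
  imports Defs
begin

text \<open>Both semantics are compositional, and beyond the last state of \<open>h\<close> the natural semantics
  only inspects, for every agent, the histories indistinguishable from \<open>h\<close>, nested up to the
  knowledge depth: exactly the data stored in \<open>KT\<^sup>k(h, r)\<close>. Its two ingredients are commutation properties of knowledge trees:
  extending \<open>h\<close> by a state \<open>s\<close> changes \<open>KT\<^sup>k(h, r)\<close> by \<open>U\<^sub>T\<^sup>k\<close> with the current observations,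
  and recording an observation \<open>o\<close> for agent \<open>a\<close> at the current position changes it by
  \<open>U\<^sub>\<Delta>\<^sup>k\<close>. The first one needs that \<open>r\<close> stops at \<open>h\<close>: then nothing is recorded after
  position \<open>|h| - 1\<close>, so along every extension of \<open>h\<close> the agents keep the observations they have
  at \<open>h\<close>.\<close>

lemma finite_KTof_hist_eq:
  fixes M :: "('s::finite, 'o, 'a) model"
  shows "finite {KTof M k h' r | h'. is_hist M h' \<and> hist_eq M r a h h'}"
proof -
  have "{KTof M k h' r | h'. is_hist M h' \<and> hist_eq M r a h h'}
        \<subseteq> (\<lambda>h'. KTof M k h' r) ` {xs. length xs = length h}"
    by (auto simp: hist_eq_def)
  then show ?thesis
    by (rule finite_subset) (simp add: finite_lists_length_eq[of UNIV, simplified])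
qed

lemma root_KTof [simp]: "root (KTof M k h r) = last h"
  by (cases k) auto

lemma fset_children_KTof:
  fixes M :: "('s::finite, 'o, 'a) model"
  shows "fset (children (KTof M (Suc k) h r) a) =
           {KTof M k h' r | h'. is_hist M h' \<and> hist_eq M r a h h'}"
  by (simp add: Abs_fset_inverse finite_KTof_hist_eq)

lemma wf_model_Sim_sym: "wf_model M \<Longrightarrow> Sim M ob x y \<Longrightarrow> Sim M ob y x"
  unfolding wf_model_def by (meson equivp_symp)

lemma wf_model_path_from:
  assumes "wf_model M"
  obtains \<pi> where "is_path M \<pi>" "\<pi> 0 = s"
proof
  have "\<forall>x. \<exists>y. Trans M x y" using assms by (simp add: wf_model_def)
  then show "is_path M (rec_nat s (\<lambda>_ x. SOME y. Trans M x y))"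
    unfolding is_path_def by (auto intro: someI_ex)
qed simp

definition splice_path :: "'s list \<Rightarrow> (nat \<Rightarrow> 's) \<Rightarrow> nat \<Rightarrow> 's" where
  "splice_path h \<pi> i = (if i < length h then h ! i else \<pi> (i - (length h - 1)))"

lemma hprefix_splice_path: "hprefix h (splice_path h \<pi>)"
  by (simp add: hprefix_def splice_path_def)

lemma suffix_splice_path:
  assumes "h \<noteq> []" "\<pi> 0 = last h"
  shows "suffix_path (splice_path h \<pi>) (length h - 1) = \<pi>"
proof
  fix i
  show "suffix_path (splice_path h \<pi>) (length h - 1) i = \<pi> i"
    using assms by (cases i) (auto simp: suffix_path_def splice_path_def last_conv_nth)
qed

lemma splice_suffix_path:
  "hprefix h \<pi> \<Longrightarrow> splice_path h (suffix_path \<pi> (length h - 1)) = \<pi>"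
  by (auto simp: fun_eq_iff suffix_path_def splice_path_def hprefix_def)

lemma is_path_splice_path:
  assumes chain: "\<And>i. Suc i < length h \<Longrightarrow> Trans M (h ! i) (h ! Suc i)"
    and "h \<noteq> []" and \<pi>: "is_path M \<pi>" "\<pi> 0 = last h"
  shows "is_path M (splice_path h \<pi>)"
  unfolding is_path_def
proof
  fix i
  consider "Suc i < length h" | "Suc i = length h" | "length h < Suc i" by linarith
  then show "Trans M (splice_path h \<pi> i) (splice_path h \<pi> (Suc i))"
  proof cases
    case 1
    then show ?thesis using chain by (simp add: splice_path_def)
  next
    case 2
    then have "splice_path h \<pi> i = \<pi> 0" "splice_path h \<pi> (Suc i) = \<pi> 1"
      using \<pi>(2) \<open>h \<noteq> []\<close> by (auto simp: splice_path_def last_conv_nth 2[symmetric])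
    then show ?thesis using \<pi>(1) by (simp add: is_path_def)
  next
    case 3
    then have "splice_path h \<pi> (Suc i) = \<pi> (Suc (i - (length h - 1)))"
      by (simp add: splice_path_def Suc_diff_le)
    then show ?thesis using 3 \<pi>(1) by (simp add: splice_path_def is_path_def)
  qed
qed

lemma is_hist_Trans: "is_hist M h \<Longrightarrow> Suc i < length h \<Longrightarrow> Trans M (h ! i) (h ! Suc i)"
  unfolding is_hist_def is_path_def
  by (metis Suc_lessD diff_zero length_upt nth_map_upt plus_nat.add_0)

lemma is_hist_iff_chain:
  assumes "wf_model M"
  shows "is_hist M h \<longleftrightarrow> h \<noteq> [] \<and> (\<forall>i. Suc i < length h \<longrightarrow> Trans M (h ! i) (h ! Suc i))"
proof
  assume "h \<noteq> [] \<and> (\<forall>i. Suc i < length h \<longrightarrow> Trans M (h ! i) (h ! Suc i))"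
  moreover obtain \<pi> where "is_path M \<pi>" "\<pi> 0 = last h"
    using wf_model_path_from[OF assms] .
  ultimately have "is_path M (splice_path h \<pi>)" and "hprefix h (splice_path h \<pi>)"
    by (auto intro: is_path_splice_path hprefix_splice_path)
  with \<open>h \<noteq> [] \<and> _\<close> show "is_hist M h"
    unfolding is_hist_def hprefix_def by (auto intro!: nth_equalityI)
qed (use is_hist_Trans in \<open>auto simp: is_hist_def\<close>)

lemma hist_eq_length: "hist_eq M r a h h' \<Longrightarrow> length h' = length h"
  by (simp add: hist_eq_def)

lemma hist_eq_snoc_snoc:
  "hist_eq M r a (h @ [s]) (h' @ [s']) \<longleftrightarrow>
     hist_eq M r a h h' \<and> (\<forall>ob\<in>set (ol M r a (length h)). Sim M ob s s')"
proof (cases "length h' = length h")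
  case True
  then show ?thesis
    unfolding hist_eq_def by (auto simp: All_less_Suc nth_append)
qed (simp add: hist_eq_def)

lemma is_hist_snoc:
  assumes "wf_model M" "h \<noteq> []"
  shows "is_hist M (h @ [s]) \<longleftrightarrow> is_hist M h \<and> Trans M (last h) s"
proof -
  obtain n where "length h = Suc n" using assms(2) by (cases h) auto
  then show ?thesis
    using assms by (auto simp: is_hist_iff_chain last_conv_nth All_less_Suc nth_append)
qed

lemma rt_stops_mono: "rt_stops r h \<Longrightarrow> length h \<le> length h' \<Longrightarrow> rt_stops r h'"
  unfolding rt_stops_def rec_stops_def by auto

lemma ol_after_stop:
  assumes "rt_stops r h" "h \<noteq> []"
  shows "ol M r a (length h) = [last (ol M r a (length h - 1))]"
  using assms by (cases h) (auto simp: rt_stops_def rec_stops_def)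

lemma obs_of_length_eq: "length h = length h' \<Longrightarrow> obs_of M h r = obs_of M h' r"
  by (simp add: obs_of_def)

lemma obs_of_snoc: "rt_stops r h \<Longrightarrow> obs_of M (h @ [s]) r = obs_of M h r"
  by (cases "h = []") (simp_all add: obs_of_def fun_eq_iff ol_after_stop)

lemma rec_at_rt_add:
  "rec_at (rt_add r a ob n b) i = rec_at (r b) i @ (if b = a \<and> i = n then [(ob, n)] else [])"
  by (simp add: rt_add_def rec_at_def)

lemma ol_rt_add:
  "i \<le> n \<Longrightarrow> ol M (rt_add r a ob n) b i = ol M r b i @ (if b = a \<and> i = n then [ob] else [])"
  by (induction i) (auto simp: rec_at_rt_add)

lemma obs_of_rt_add:
  "length h = Suc n \<Longrightarrow> obs_of M h (rt_add r a ob n) = (obs_of M h r)(a := ob)"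
  by (auto simp: obs_of_def ol_rt_add fun_eq_iff)

lemma rt_stops_rt_add: "rt_stops r h \<Longrightarrow> length h = Suc n \<Longrightarrow> rt_stops (rt_add r a ob n) h"
  by (simp add: rt_stops_def rec_stops_def rec_at_rt_add)

lemma hist_eq_rt_add:
  assumes "length h = Suc n"
  shows "hist_eq M (rt_add r a ob n) b h h' \<longleftrightarrow>
           hist_eq M r b h h' \<and> (b = a \<longrightarrow> Sim M ob (last h) (last h'))"
proof (cases "length h' = length h")
  case True
  then have "last h = h ! n" "last h' = h' ! n"
    using assms by (metis diff_Suc_1 last_conv_nth list.size(3) nat.distinct(1))+
  then show ?thesis
    using assms True unfolding hist_eq_def by (auto simp: All_less_Suc ol_rt_add)
qed (auto simp: hist_eq_def)

lemma hist_eq_snocE: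
  assumes "hist_eq M r a (h @ [s]) h''"
  obtains h' s' where "h'' = h' @ [s']"
  using hist_eq_length[OF assms] by (cases h'' rule: rev_cases) auto

lemma is_hist_hist_eq_snoc_iff:
  assumes wf: "wf_model M" and "is_hist M h" "rt_stops r h"
  shows "is_hist M (h' @ [s']) \<and> hist_eq M r a (h @ [s]) (h' @ [s']) \<longleftrightarrow>
           is_hist M h' \<and> hist_eq M r a h h' \<and> Trans M (last h') s'
           \<and> Sim M (obs_of M h r a) s' s"
proof -
  have "h \<noteq> []" using assms(2) by (simp add: is_hist_def)
  then have ol: "set (ol M r a (length h)) = {obs_of M h r a}"
    using assms(3) by (simp add: ol_after_stop obs_of_def)
  show ?thesis
  proof (cases "hist_eq M r a h h'")
    case True
    then have "h' \<noteq> []" using \<open>h \<noteq> []\<close> hist_eq_length by fastforce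
    then have "is_hist M (h' @ [s']) \<longleftrightarrow> is_hist M h' \<and> Trans M (last h') s'"
      by (rule is_hist_snoc[OF wf])
    moreover have "hist_eq M r a (h @ [s]) (h' @ [s']) \<longleftrightarrow> Sim M (obs_of M h r a) s' s"
      using True ol wf_model_Sim_sym[OF wf] by (auto simp: hist_eq_snoc_snoc)
    ultimately show ?thesis using True by blast
  qed (simp add: hist_eq_snoc_snoc)
qed

lemma KTof_snoc:
  fixes M :: "('s::finite, 'o::finite, 'a::finite) model"
  assumes wf: "wf_model M"
  shows "is_hist M h \<Longrightarrow> rt_stops r h \<Longrightarrow>
           KTof M k (h @ [s]) r = updT M k (KTof M k h r) s (obs_of M h r)"
proof (induction k arbitrary: h s)
  case 0
  then show ?case by simp
next
  case (Suc k)
  let ?ov = "obs_of M h r"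
  have IH: "KTof M k (h' @ [s']) r = updT M k (KTof M k h' r) s' ?ov"
    if "is_hist M h'" "hist_eq M r a h h'" for a h' s'
    using Suc.IH[OF that(1)] rt_stops_mono[OF Suc.prems(2)] obs_of_length_eq
      hist_eq_length[OF that(2)] by (metis order_refl)
  have "{KTof M k h'' r | h''. is_hist M h'' \<and> hist_eq M r a (h @ [s]) h''}
     = {updT M k t' s' ?ov | t' s'. t' |\<in>| children (KTof M (Suc k) h r) a
          \<and> Sim M (?ov a) s' s \<and> Trans M (root t') s'}" (is "?L = ?R") for a
  proof
    show "?L \<subseteq> ?R"
    proof
      fix x assume "x \<in> ?L"
      then obtain h'' where x: "x = KTof M k h'' r"
        and h'': "is_hist M h''" "hist_eq M r a (h @ [s]) h''" by blast
      then obtain h' s' where "h'' = h' @ [s']" by (blast elim: hist_eq_snocE)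
      with h'' is_hist_hist_eq_snoc_iff[OF wf Suc.prems] have
        "is_hist M h'" "hist_eq M r a h h'" "Trans M (last h') s'" "Sim M (?ov a) s' s"
        by auto
      with x \<open>h'' = h' @ [s']\<close> IH show "x \<in> ?R"
        unfolding fset_children_KTof by fastforce
    qed
  next
    show "?R \<subseteq> ?L"
    proof
      fix x assume "x \<in> ?R"
      then obtain h' s' where x: "x = updT M k (KTof M k h' r) s' ?ov"
        and h': "is_hist M h'" "hist_eq M r a h h'" "Trans M (last h') s'" "Sim M (?ov a) s' s"
        unfolding fset_children_KTof by auto
      then have "x = KTof M k (h' @ [s']) r" using IH by simp
      moreover have "is_hist M (h' @ [s']) \<and> hist_eq M r a (h @ [s]) (h' @ [s'])"
        using h' is_hist_hist_eq_snoc_iff[OF wf Suc.prems] by blast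
      ultimately show "x \<in> ?L" by blast
    qed
  qed
  then show ?case by simp
qed

lemma root_updD [simp]: "root (updD M k t ob a) = root t"
  by (cases k) auto

lemma KTof_rt_add:
  fixes M :: "('s::finite, 'o::finite, 'a::finite) model"
  assumes wf: "wf_model M"
  shows "length h = Suc n \<Longrightarrow> KTof M k h (rt_add r a ob n) = updD M k (KTof M k h r) ob a"
proof (induction k arbitrary: h)
  case 0
  then show ?case by simp
next
  case (Suc k)
  let ?r' = "rt_add r a ob n" and ?F = "\<lambda>t. updD M k t ob a"
  have IH: "KTof M k h' ?r' = ?F (KTof M k h' r)" if "hist_eq M r j h h'" for j h'
    using Suc.IH Suc.prems hist_eq_length[OF that] by simp
  have "fset (children (KTof M (Suc k) h ?r') j) =
          ?F ` {t \<in> fset (children (KTof M (Suc k) h r) j). j = a \<longrightarrow> Sim M ob (root t) (last h)}"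
    for j
    unfolding fset_children_KTof hist_eq_rt_add[OF Suc.prems]
    using IH wf_model_Sim_sym[OF wf] by (auto; metis)
  moreover have "fset (children (updD M (Suc k) (KTof M (Suc k) h r) ob a) j) =
          ?F ` {t \<in> fset (children (KTof M (Suc k) h r) j). j = a \<longrightarrow> Sim M ob (root t) (last h)}"
    for j
    by (auto simp: ffilter.rep_eq fimage.rep_eq)
  ultimately show ?case
    by (intro ktree.expand)
      (simp_all add: fun_eq_iff fset_inject[symmetric] del: KTof.simps updD.simps)
qed

lemma length_pprefix [simp]: "length (pprefix \<pi> m) = Suc m"
  by (simp add: pprefix_def)

lemma pprefix_Suc: "pprefix \<pi> (Suc m) = pprefix \<pi> m @ [\<pi> (Suc m)]"
  by (simp add: pprefix_def)

lemma is_hist_pprefix: "is_path M \<pi> \<Longrightarrow> is_hist M (pprefix \<pi> m)"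
  unfolding is_hist_def pprefix_def by auto

lemma pprefix_eq_if_hprefix: "hprefix h \<pi> \<Longrightarrow> length h = Suc n \<Longrightarrow> pprefix \<pi> n = h"
  unfolding pprefix_def hprefix_def by (auto intro: nth_equalityI simp del: upt_Suc)

lemma suffix_path_suffix_path: "suffix_path (suffix_path \<pi> m) j = suffix_path \<pi> (m + j)"
  by (simp add: suffix_path_def add.assoc)

lemma is_path_suffix_path: "is_path M \<pi> \<Longrightarrow> is_path M (suffix_path \<pi> m)"
  by (simp add: is_path_def suffix_path_def)

lemma obs_of_pprefix_add:
  "rt_stops r (pprefix \<pi> m) \<Longrightarrow> obs_of M (pprefix \<pi> (m + j)) r = obs_of M (pprefix \<pi> m) r"
proof (induction j)
  case (Suc j)
  then have "rt_stops r (pprefix \<pi> (m + j))" by (simp add: rt_stops_mono)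
  then show ?case using Suc by (simp add: pprefix_Suc obs_of_snoc)
qed simp

lemma updT_iter_KTof:
  fixes M :: "('s::finite, 'o::finite, 'a::finite) model"
  assumes wf: "wf_model M" and \<pi>: "is_path M \<pi>" and stops: "rt_stops r (pprefix \<pi> m)"
  shows "updT_iter M k (KTof M k (pprefix \<pi> m) r) (suffix_path \<pi> m) (obs_of M (pprefix \<pi> m) r) j
           = KTof M k (pprefix \<pi> (m + j)) r"
proof (induction j)
  case (Suc j)
  have "rt_stops r (pprefix \<pi> (m + j))" using stops by (simp add: rt_stops_mono)
  then show ?case
    using Suc KTof_snoc[OF wf is_hist_pprefix[OF \<pi>]] obs_of_pprefix_add[OF stops]
    by (simp add: pprefix_Suc suffix_path_def)
qed simp

lemma hsat_All_iff_splice_path: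
  assumes h: "is_hist M h"
  shows "hsat M (All p) h r \<longleftrightarrow>
           (\<forall>\<pi>. is_path M \<pi> \<and> \<pi> 0 = last h \<longrightarrow> psat M p (splice_path h \<pi>) (length h - 1) r)"
proof
  have "h \<noteq> []" using h by (simp add: is_hist_def)
  show "hsat M (All p) h r" if H: "\<forall>\<pi>. is_path M \<pi> \<and> \<pi> 0 = last h \<longrightarrow>
                                   psat M p (splice_path h \<pi>) (length h - 1) r"
    unfolding hsat.simps
  proof (intro allI impI)
    fix \<pi> assume \<pi>: "is_path M \<pi> \<and> hprefix h \<pi>"
    then have "is_path M (suffix_path \<pi> (length h - 1))" "suffix_path \<pi> (length h - 1) 0 = last h"
      using \<open>h \<noteq> []\<close> is_path_suffix_path
      by (auto simp: suffix_path_def hprefix_def last_conv_nth)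
    with H have "psat M p (splice_path h (suffix_path \<pi> (length h - 1))) (length h - 1) r"
      by blast
    with \<pi> show "psat M p \<pi> (length h - 1) r" by (metis splice_suffix_path)
  qed
next
  assume "hsat M (All p) h r"
  then show "\<forall>\<pi>. is_path M \<pi> \<and> \<pi> 0 = last h \<longrightarrow> psat M p (splice_path h \<pi>) (length h - 1) r"
    using is_path_splice_path[OF is_hist_Trans[OF h]] h
    by (auto simp: hprefix_splice_path is_hist_def)
qed

lemma psat_Until_iff_shift:
  "psat M (Until p q) \<pi> m r \<longleftrightarrow> (\<exists>n. psat M q \<pi> (m + n) r \<and> (\<forall>j<n. psat M p \<pi> (m + j) r))"
proof
  assume "psat M (Until p q) \<pi> m r"
  then obtain m' where "m \<le> m'" "psat M q \<pi> m' r" "\<forall>j. m \<le> j \<and> j < m' \<longrightarrow> psat M p \<pi> j r"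
    by auto
  then show "\<exists>n. psat M q \<pi> (m + n) r \<and> (\<forall>j<n. psat M p \<pi> (m + j) r)"
    by (intro exI[of _ "m' - m"]) auto
next
  assume "\<exists>n. psat M q \<pi> (m + n) r \<and> (\<forall>j<n. psat M p \<pi> (m + j) r)"
  then obtain n where "psat M q \<pi> (m + n) r" "\<forall>j<n. psat M p \<pi> (m + j) r" by blast
  then show "psat M (Until p q) \<pi> m r"
    by (auto intro!: exI[of _ "m + n"]) (metis add_less_cancel_left le_add_diff_inverse)
qed

lemma ipsat_Next_KTof:
  fixes M :: "('s::finite, 'o::finite, 'a::finite) model"
  assumes wf: "wf_model M" and \<pi>: "is_path M \<pi>" and stops: "rt_stops r (pprefix \<pi> m)"
  shows "ipsat M (Next p) k (suffix_path \<pi> m) (KTof M k (pprefix \<pi> m) r) (obs_of M (pprefix \<pi> m) r)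
    \<longleftrightarrow> ipsat M p k (suffix_path \<pi> (Suc m)) (KTof M k (pprefix \<pi> (Suc m)) r)
                 (obs_of M (pprefix \<pi> (Suc m)) r)"
  using updT_iter_KTof[OF wf \<pi> stops, of k 1] obs_of_pprefix_add[OF stops, of M 1]
  by (simp add: suffix_path_suffix_path suffix_path_def)

lemma ipsat_Until_KTof:
  fixes M :: "('s::finite, 'o::finite, 'a::finite) model"
  assumes wf: "wf_model M" and \<pi>: "is_path M \<pi>" and stops: "rt_stops r (pprefix \<pi> m)"
  shows "ipsat M (Until p q) k (suffix_path \<pi> m) (KTof M k (pprefix \<pi> m) r) (obs_of M (pprefix \<pi> m) r)
    \<longleftrightarrow> (\<exists>n. ipsat M q k (suffix_path \<pi> (m + n)) (KTof M k (pprefix \<pi> (m + n)) r)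
                     (obs_of M (pprefix \<pi> (m + n)) r)
           \<and> (\<forall>j<n. ipsat M p k (suffix_path \<pi> (m + j)) (KTof M k (pprefix \<pi> (m + j)) r)
                         (obs_of M (pprefix \<pi> (m + j)) r)))"
  by (simp add: updT_iter_KTof[OF wf \<pi> stops] obs_of_pprefix_add[OF stops] suffix_path_suffix_path)

text \<open>The depth \<open>k\<close> is only bounded below by the knowledge depth, because the conjuncts of a
  formula may have smaller depth and are still evaluated on the same tree.\<close>

lemma hsat_psat_iff_tree_semantics:
  fixes M :: "('s::finite, 'o::finite, 'a::finite) model"
  assumes wf: "wf_model M"
  shows "\<forall>k h r. kdepth \<phi> \<le> k \<longrightarrow> is_hist M h \<longrightarrow> rt_stops r h \<longrightarrow>
           (hsat M \<phi> h r \<longleftrightarrow> isat M \<phi> k (KTof M k h r) (obs_of M h r))"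
    and "\<forall>k \<pi> m r. kdepth_p \<psi> \<le> k \<longrightarrow> is_path M \<pi> \<longrightarrow> rt_stops r (pprefix \<pi> m) \<longrightarrow>
           (psat M \<psi> \<pi> m r \<longleftrightarrow>
              ipsat M \<psi> k (suffix_path \<pi> m) (KTof M k (pprefix \<pi> m) r) (obs_of M (pprefix \<pi> m) r))"
proof (induction \<phi> and \<psi>)
  case (All p)
  show ?case
  proof (intro allI impI)
    fix k h and r :: "('a, 'o) rtuple"
    assume "kdepth (All p) \<le> k" "is_hist M h" "rt_stops r h"
    have "psat M p (splice_path h \<pi>) (length h - 1) r \<longleftrightarrow>
            ipsat M p k \<pi> (KTof M k h r) (obs_of M h r)"
      if "is_path M \<pi>" "\<pi> 0 = last h" for \<pi>
    proof -
      have "h \<noteq> []" using \<open>is_hist M h\<close> by (simp add: is_hist_def)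
      then have "pprefix (splice_path h \<pi>) (length h - 1) = h"
        by (simp add: pprefix_eq_if_hprefix hprefix_splice_path)
      moreover have "is_path M (splice_path h \<pi>)"
        using is_path_splice_path[OF is_hist_Trans[OF \<open>is_hist M h\<close>] \<open>h \<noteq> []\<close> that] .
      ultimately show ?thesis
        using All.IH \<open>kdepth (All p) \<le> k\<close> \<open>rt_stops r h\<close> suffix_splice_path[of h \<pi>] \<open>h \<noteq> []\<close> that(2)
        by (metis kdepth.simps(4))
    qed
    then show "hsat M (All p) h r \<longleftrightarrow> isat M (All p) k (KTof M k h r) (obs_of M h r)"
      using hsat_All_iff_splice_path[OF \<open>is_hist M h\<close>] by auto
  qed
next
  case (Know a f)
  show ?case
  proof (intro allI impI)
    fix k h and r :: "('a, 'o) rtuple"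
    assume "kdepth (Know a f) \<le> k" "is_hist M h" "rt_stops r h"
    then obtain k' where k: "k = Suc k'" "kdepth f \<le> k'" by (cases k) auto
    have "hsat M f h' r \<longleftrightarrow> isat M f k' (KTof M k' h' r) (obs_of M h r)"
      if "is_hist M h'" "hist_eq M r a h h'" for h'
    proof -
      have "length h' = length h" using hist_eq_length[OF that(2)] .
      then have "rt_stops r h'" using rt_stops_mono[OF \<open>rt_stops r h\<close>, of h'] by simp
      moreover have "obs_of M h' r = obs_of M h r"
        using obs_of_length_eq[OF \<open>length h' = length h\<close>] .
      ultimately
      show ?thesis using Know.IH[rule_format, OF k(2) that(1)] by simp
    qed
    then show "hsat M (Know a f) h r \<longleftrightarrow> isat M (Know a f) k (KTof M k h r) (obs_of M h r)"
      using fset_children_KTof[of M k' h r a] k by auto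
  qed
next
  case (Delta a ob f)
  show ?case
  proof (intro allI impI)
    fix k h and r :: "('a, 'o) rtuple"
    assume "kdepth (Delta a ob f) \<le> k" "is_hist M h" "rt_stops r h"
    then obtain n where n: "length h = Suc n" by (cases h) (auto simp: is_hist_def)
    then show "hsat M (Delta a ob f) h r \<longleftrightarrow> isat M (Delta a ob f) k (KTof M k h r) (obs_of M h r)"
      using Delta.IH \<open>kdepth (Delta a ob f) \<le> k\<close> \<open>is_hist M h\<close> rt_stops_rt_add[OF \<open>rt_stops r h\<close> n]
      by (simp add: KTof_rt_add[OF wf n] obs_of_rt_add[OF n])
  qed
next
  case (PH f)
  then show ?case by (auto simp: is_hist_pprefix)
next
  case (Next p)
  show ?case
  proof (intro allI impI)
    fix k \<pi> m and r :: "('a, 'o) rtuple"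
    assume "kdepth_p (Next p) \<le> k" "is_path M \<pi>" "rt_stops r (pprefix \<pi> m)"
    moreover have "rt_stops r (pprefix \<pi> (Suc m))"
      using rt_stops_mono[OF \<open>rt_stops r (pprefix \<pi> m)\<close>, of "pprefix \<pi> (Suc m)"] by simp
    ultimately show "psat M (Next p) \<pi> m r \<longleftrightarrow> ipsat M (Next p) k (suffix_path \<pi> m)
                       (KTof M k (pprefix \<pi> m) r) (obs_of M (pprefix \<pi> m) r)"
      using Next.IH ipsat_Next_KTof[OF wf \<open>is_path M \<pi>\<close> \<open>rt_stops r (pprefix \<pi> m)\<close>]
      by (simp del: ipsat.simps)
  qed
next
  case (Until p q)
  show ?case
  proof (intro allI impI)
    fix k \<pi> m and r :: "('a, 'o) rtuple"
    assume kd: "kdepth_p (Until p q) \<le> k" and \<pi>: "is_path M \<pi>"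
      and stops: "rt_stops r (pprefix \<pi> m)"
    have IH: "psat M \<chi> \<pi> (m + j) r \<longleftrightarrow> ipsat M \<chi> k (suffix_path \<pi> (m + j))
                (KTof M k (pprefix \<pi> (m + j)) r) (obs_of M (pprefix \<pi> (m + j)) r)"
      if "\<chi> = p \<or> \<chi> = q" for \<chi> j
      using Until.IH kd \<pi> rt_stops_mono[OF stops, of "pprefix \<pi> (m + j)"] that by auto
    show "psat M (Until p q) \<pi> m r \<longleftrightarrow> ipsat M (Until p q) k (suffix_path \<pi> m)
            (KTof M k (pprefix \<pi> m) r) (obs_of M (pprefix \<pi> m) r)"
      unfolding psat_Until_iff_shift ipsat_Until_KTof[OF wf \<pi> stops] using IH[of p] IH[of q] by simp
  qed
qed auto

theorem mainTheorem6:
  fixes M :: "('s::finite, 'o::finite, 'a::finite) model"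
    and \<phi> :: "('a, 'o) hform"
    and h :: "'s list"
    and r :: "('a, 'o) rtuple"
    and k :: nat
  assumes "kdepth \<phi> = k"
    and "wf_model M"
    and "is_hist M h"
    and "rt_stops r h"
  shows "hsat M \<phi> h r \<longleftrightarrow> isat M \<phi> k (KTof M k h r) (obs_of M h r)"
  using hsat_psat_iff_tree_semantics(1)[OF assms(2)] assms by auto

end
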